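(* Let $\mathbb{K}$ be a field of characteristic $0$, let $F(n)$ be a holonomic sequence over $\mathbb{K}$, and let $L=\sum_{i=0}^{J}a_i(n)\sigma^i\in\operatorname{ann}F(n)$ be a nonzero operator. Then there exists a nonzero polynomial $p(n)\in\mathbb{K}[n]$ such that $p(n)F(n)$ is summable and \[\deg p(n)\le \deg L + C_L,\] where $\deg L$ is the degree of $L$ and $C_L$ is the continued zero index of $L$.
   Context: $\sigma$ is the shift operator, $\sigma(F(n))=F(n+1)$, and for $L=\sum_{i=0}^J a_i(n)\sigma^i\in\mathbb{K}[n][\sigma]$, $L(F(n))=\sum_{i=0}^J a_i(n)F(n+i)$. The annihilator is $\operatorname{ann}F(n)=\{L\in\mathbb{K}[n][\sigma]: L(F(n))=0\}$; $F$ is holonomic if $\operatorname{ann}F(n)\ne\{0\}$. The order $\operatorname{ord}F(n)$ is the minimal order $J$ of a nonzero element of $\operatorname{ann}F(n)$. A holonomic sequence $G(n)$ of order $J$ is summable if $G(n)=\Delta\big(\sum_{i=0}^{J-1}u_i(n)G(n+i)\big)$ for some rational functions $u_i(n)\in\mathbb{K}(n)$, where $\Delta=\sigma-1$. The adjoint of $L$ acts on polynomials by $L^*(x(n))=\sum_{i=0}^J a_i(n-i)x(n-i)$. Degree of $L$: put $b_k(n)=\sum_{j=k}^{J}\binom{j}{k}a_{J-j}(n+j-J)$ for $0\le k\le J$, and $\deg L=\max_{0\le k\le J}\{\deg b_k(n)-k\}$. Continued zero index $C_L$: if $L^*(1)\neq0$ then $C_L=0$; if $L^*(1)=0$ then $C_L$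 is the positive integer with $L^*(n^{C_L})\neq 0$ and $L^*(n^i)=0$ for $0\le i\le C_L-1$. *)

theory Defs
  imports "HOL-Computational_Algebra.Polynomial"
begin

text \<open>A sequence is a function nat => 'k. An operator L = sum_{i=0}^J a_i(n) sigma^i
  is represented by its coefficient polynomials a :: nat => 'k poly together with J.\<close>

definition apply_op :: "(nat \<Rightarrow> 'k::comm_ring_1 poly) \<Rightarrow> nat \<Rightarrow> (nat \<Rightarrow> 'k) \<Rightarrow> nat \<Rightarrow> 'k" where
  "apply_op a J F n = (\<Sum>i\<le>J. poly (a i) (of_nat n) * F (n + i))"

definition op_nonzero :: "(nat \<Rightarrow> 'k::zero poly) \<Rightarrow> nat \<Rightarrow> bool" where
  "op_nonzero a J = (\<exists>i\<le>J. a i \<noteq> 0)"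

definition annihilates :: "(nat \<Rightarrow> 'k::comm_ring_1 poly) \<Rightarrow> nat \<Rightarrow> (nat \<Rightarrow> 'k) \<Rightarrow> bool" where
  "annihilates a J F = (\<forall>n. apply_op a J F n = 0)"

definition holonomic :: "(nat \<Rightarrow> 'k::comm_ring_1) \<Rightarrow> bool" where
  "holonomic F = (\<exists>a J. op_nonzero a J \<and> annihilates a J F)"

definition seq_ord :: "(nat \<Rightarrow> 'k::comm_ring_1) \<Rightarrow> nat" where
  "seq_ord F = (LEAST J. \<exists>a. op_nonzero a J \<and> annihilates a J F)"

text \<open>Summability: G(n) = Delta(sum_{i<J} u_i(n) G(n+i)), J = ord G, with rational
  functions u_i = q_i / d (common denominator d \<noteq> 0); the identity is required at every
  n where all u_i(n) and u_i(n+1) are defined.\<close>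
definition summable_seq :: "(nat \<Rightarrow> 'k::field) \<Rightarrow> bool" where
  "summable_seq G = (holonomic G \<and>
     (\<exists>(q :: nat \<Rightarrow> 'k poly) (d :: 'k poly). d \<noteq> 0 \<and>
        (\<forall>n. poly d (of_nat n) \<noteq> 0 \<and> poly d (of_nat (n + 1)) \<noteq> 0 \<longrightarrow>
           G n = (\<Sum>i<seq_ord G. poly (q i) (of_nat (n + 1)) / poly d (of_nat (n + 1)) * G (n + 1 + i))
               - (\<Sum>i<seq_ord G. poly (q i) (of_nat n) / poly d (of_nat n) * G (n + i)))))"

definition op_order :: "(nat \<Rightarrow> 'k::zero poly) \<Rightarrow> nat \<Rightarrow> nat" where
  "op_order a J = (GREATEST i. i \<le> J \<and> a i \<noteq> 0)"

definition b_coeff :: "(nat \<Rightarrow> 'k::comm_ring_1 poly) \<Rightarrow> nat \<Rightarrow> nat \<Rightarrow> 'k poly" where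
  "b_coeff a J k = (let J' = op_order a J in
     (\<Sum>j=k..J'. of_nat (j choose k) * pcompose (a (J' - j)) [: of_int (int j - int J'), 1 :]))"

definition op_deg :: "(nat \<Rightarrow> 'k::comm_ring_1 poly) \<Rightarrow> nat \<Rightarrow> int" where
  "op_deg a J = Max {int (degree (b_coeff a J k)) - int k | k. k \<le> op_order a J \<and> b_coeff a J k \<noteq> 0}"

definition adjoint :: "(nat \<Rightarrow> 'k::comm_ring_1 poly) \<Rightarrow> nat \<Rightarrow> 'k poly \<Rightarrow> 'k poly" where
  "adjoint a J x = (\<Sum>i\<le>J. pcompose (a i * x) [: - of_nat i, 1 :])"

definition cont_zero_index :: "(nat \<Rightarrow> 'k::comm_ring_1 poly) \<Rightarrow> nat \<Rightarrow> nat" where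
  "cont_zero_index a J = (LEAST c. adjoint a J (monom 1 c) \<noteq> 0)"

end

theory Submission
  imports Defs
begin

text \<open>Take p = L^*(n^C) with C = C_L, the first monomial on which the adjoint does not vanish.
  Lagrange's identity x L(F) - L^*(x) F = \<Delta>(concomitant) together with L(F) = 0 shows that
  p F = \<Delta>(-concomitant), and the concomitant is a K(n)-linear combination of shifts of F.
  Dividing by p these become shifts of G = p F, and the minimal recurrence of G reduces them to
  G, ..., G(n + ord G - 1); so G is summable. Expanding L^*(x) in the forward differences
  \<Delta>^k x, with the coefficients b_k of the definition of deg L, gives
  deg L^*(x) \<le> deg L + deg x, hence the degree bound.\<close>

lemma finite_nat_roots:
  fixes p :: "'a::{idom,ring_char_0} poly"
  assumes "p \<noteq> 0"
  shows "finite {n::nat. poly p (of_nat n) = 0}"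
proof -
  have "{n::nat. poly p (of_nat n) = 0} = of_nat -` {x. poly p x = 0}"
    by auto
  then show ?thesis
    using finite_vimageI[OF poly_roots_finite[OF assms] inj_of_nat] by simp
qed

lemma eventually_poly_of_nat_nonzero:
  fixes p :: "'a::{idom,ring_char_0} poly"
  assumes "p \<noteq> 0"
  shows "\<forall>\<^sub>F n in sequentially. poly p (of_nat (n + s)) \<noteq> 0"
proof -
  have "\<forall>\<^sub>F n in sequentially. poly p (of_nat n) \<noteq> 0"
    using finite_nat_roots[OF assms]
    by (simp add: cofinite_eq_sequentially[symmetric] eventually_cofinite)
  then show ?thesis
    by (rule eventually_sequentially_seg[THEN iffD2])
qed

lemma ex_poly_nonzero_only_from:
  "\<exists>R :: 'a::{idom,ring_char_0} poly. R \<noteq> 0 \<and> (\<forall>n. poly R (of_nat n) \<noteq> 0 \<longrightarrow> N \<le> n)"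
proof (intro exI conjI allI impI)
  show "(\<Prod>t<N. [:- of_nat t, 1:]) \<noteq> (0 :: 'a poly)"
    by (subst prod_zero_iff) auto
next
  fix n assume "poly (\<Prod>t<N. [:- of_nat t, 1:]) (of_nat n :: 'a) \<noteq> 0"
  then have "(\<Prod>t<N. of_nat n - of_nat t :: 'a) \<noteq> 0"
    by (simp add: poly_prod)
  then show "N \<le> n"
    by (metis (no_types, lifting) diff_self lessThan_iff linorder_not_le prod_zero_iff finite_lessThan)
qed

section \<open>Rational combinations of shifts\<close>

text \<open>Identities between rational functions of n are only required for large n, so that the
  finitely many zeros of the denominators never matter.\<close>

definition rational_shift_span :: "nat \<Rightarrow> (nat \<Rightarrow> 'k::field) \<Rightarrow> (nat \<Rightarrow> 'k) \<Rightarrow> bool" where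
  "rational_shift_span k G H \<longleftrightarrow> (\<exists>q d. d \<noteq> 0 \<and>
     (\<forall>\<^sub>F n in sequentially. H n = (\<Sum>l<k. poly (q l) (of_nat n) / poly d (of_nat n) * G (n + l))))"

lemma rational_shift_span_cong:
  assumes "rational_shift_span k G H" "\<forall>\<^sub>F n in sequentially. H' n = H n"
  shows "rational_shift_span k G H'"
proof -
  obtain q d where "d \<noteq> 0"
    and "\<forall>\<^sub>F n in sequentially. H n = (\<Sum>l<k. poly (q l) (of_nat n) / poly d (of_nat n) * G (n + l))"
    using assms(1) unfolding rational_shift_span_def by blast
  moreover from assms(2) this(2)
  have "\<forall>\<^sub>F n in sequentially. H' n = (\<Sum>l<k. poly (q l) (of_nat n) / poly d (of_nat n) * G (n + l))"
    by eventually_elim simp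
  ultimately show ?thesis
    unfolding rational_shift_span_def by blast
qed

lemma rational_shift_span_shift:
  assumes "m < k"
  shows "rational_shift_span k G (\<lambda>n. G (n + m))"
  unfolding rational_shift_span_def
proof (intro exI conjI always_eventually allI)
  fix n
  have "(\<Sum>l<k. poly (if l = m then 1 else 0) (of_nat n) / poly 1 (of_nat n) * G (n + l)) =
      (\<Sum>l<k. if l = m then G (n + l) else 0)"
    by (rule sum.cong) auto
  then show "G (n + m) = (\<Sum>l<k. poly (if l = m then 1 else 0) (of_nat n) / poly 1 (of_nat n) * G (n + l))"
    using assms by simp
qed simp

lemma rational_shift_span_zero: "rational_shift_span k G (\<lambda>n. 0)"
  unfolding rational_shift_span_def by (intro exI[of _ "\<lambda>l. 0"] exI[of _ 1]) simp

lemma rational_shift_span_add: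
  fixes G :: "nat \<Rightarrow> 'k::field_char_0"
  assumes "rational_shift_span k G H1" "rational_shift_span k G H2"
  shows "rational_shift_span k G (\<lambda>n. H1 n + H2 n)"
proof -
  obtain q1 d1 where d1: "d1 \<noteq> 0"
    and H1: "\<forall>\<^sub>F n in sequentially. H1 n = (\<Sum>l<k. poly (q1 l) (of_nat n) / poly d1 (of_nat n) * G (n + l))"
    using assms(1) unfolding rational_shift_span_def by blast
  obtain q2 d2 where d2: "d2 \<noteq> 0"
    and H2: "\<forall>\<^sub>F n in sequentially. H2 n = (\<Sum>l<k. poly (q2 l) (of_nat n) / poly d2 (of_nat n) * G (n + l))"
    using assms(2) unfolding rational_shift_span_def by blast
  have "\<forall>\<^sub>F n in sequentially. H1 n + H2 n =
      (\<Sum>l<k. poly (q1 l * d2 + q2 l * d1) (of_nat n) / poly (d1 * d2) (of_nat n) * G (n + l))"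
    using H1 H2 eventually_poly_of_nat_nonzero[OF d1, of 0] eventually_poly_of_nat_nonzero[OF d2, of 0]
    by eventually_elim (simp add: sum.distrib[symmetric] add_frac_eq ring_distribs mult_ac)
  moreover have "d1 * d2 \<noteq> 0"
    using d1 d2 by simp
  ultimately show ?thesis
    unfolding rational_shift_span_def
    by (intro exI[of _ "\<lambda>l. q1 l * d2 + q2 l * d1"] exI[of _ "d1 * d2"]) simp
qed

lemma rational_shift_span_sum:
  fixes G :: "nat \<Rightarrow> 'k::field_char_0"
  assumes "\<And>i. i \<in> A \<Longrightarrow> rational_shift_span k G (H i)"
  shows "rational_shift_span k G (\<lambda>n. \<Sum>i\<in>A. H i n)"
  using assms
proof (induction A rule: infinite_finite_induct)
  case (insert x A)
  then show ?case
    using rational_shift_span_add[of k G "H x" "\<lambda>n. \<Sum>i\<in>A. H i n"] by simp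
qed (simp_all add: rational_shift_span_zero)

lemma rational_shift_span_scale:
  assumes "s \<noteq> 0" "rational_shift_span k G H"
  shows "rational_shift_span k G (\<lambda>n. poly r (of_nat n) / poly s (of_nat n) * H n)"
proof -
  obtain q d where d: "d \<noteq> 0"
    and H: "\<forall>\<^sub>F n in sequentially. H n = (\<Sum>l<k. poly (q l) (of_nat n) / poly d (of_nat n) * G (n + l))"
    using assms(2) unfolding rational_shift_span_def by blast
  have "\<forall>\<^sub>F n in sequentially. poly r (of_nat n) / poly s (of_nat n) * H n =
      (\<Sum>l<k. poly (r * q l) (of_nat n) / poly (s * d) (of_nat n) * G (n + l))"
    using H by eventually_elim (simp add: sum_distrib_left divide_inverse mult_ac)
  moreover have "s * d \<noteq> 0"
    using assms(1) d by simp
  ultimately show ?thesis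
    unfolding rational_shift_span_def by (intro exI[of _ "\<lambda>l. r * q l"] exI[of _ "s * d"]) simp
qed

lemma rational_shift_span_poly_mult:
  assumes "rational_shift_span k G H"
  shows "rational_shift_span k G (\<lambda>n. poly r (of_nat n) * H n)"
  using rational_shift_span_scale[OF one_neq_zero assms, of r] by simp

lemma rational_shift_span_cancel_poly:
  fixes G :: "nat \<Rightarrow> 'k::field_char_0"
  assumes "p \<noteq> 0" "rational_shift_span k G (\<lambda>n. poly p (of_nat n) * H n)"
  shows "rational_shift_span k G H"
proof (rule rational_shift_span_cong)
  show "rational_shift_span k G (\<lambda>n. poly 1 (of_nat n) / poly p (of_nat n) * (poly p (of_nat n) * H n))"
    using assms by (rule rational_shift_span_scale)
  show "\<forall>\<^sub>F n in sequentially. H n = poly 1 (of_nat n) / poly p (of_nat n) * (poly p (of_nat n) * H n)"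
    using eventually_poly_of_nat_nonzero[OF assms(1), of 0] by eventually_elim simp
qed

lemma rational_shift_span_all_shifts:
  fixes G :: "nat \<Rightarrow> 'k::field_char_0"
  assumes ann: "annihilates c k G" and lead: "c k \<noteq> 0"
  shows "rational_shift_span k G (\<lambda>n. G (n + m))"
proof (induction m rule: less_induct)
  case (less m)
  show ?case
  proof (cases "m < k")
    case True
    then show ?thesis
      by (rule rational_shift_span_shift)
  next
    case False
    define s where "s = m - k"
    have m: "m = s + k"
      using False s_def by simp
    define r where "r i = - pcompose (c i) [:of_nat s, 1:]" for i
    define d where "d = pcompose (c k) [:of_nat s, 1:]"
    have "d \<noteq> 0"
      using lead pcompose_eq_0_iff[of "[:of_nat s, 1:]" "c k"] by (simp add: d_def)
    then have "rational_shift_span k G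
        (\<lambda>n. \<Sum>i<k. poly (r i) (of_nat n) / poly d (of_nat n) * G (n + (s + i)))"
      using less m by (intro rational_shift_span_sum rational_shift_span_scale) auto
    moreover have "\<forall>\<^sub>F n in sequentially.
        G (n + m) = (\<Sum>i<k. poly (r i) (of_nat n) / poly d (of_nat n) * G (n + (s + i)))"
      using eventually_poly_of_nat_nonzero[OF lead, of s]
    proof eventually_elim
      case (elim n)
      have "(\<Sum>i<k. poly (c i) (of_nat (n + s)) * G (n + (s + i))) + poly (c k) (of_nat (n + s)) * G (n + m) = 0"
        using ann[unfolded annihilates_def, rule_format, of "n + s"] m unfolding apply_op_def
        by (simp add: lessThan_Suc_atMost[symmetric] add.assoc)
      with elim have "G (n + m) =
          - (\<Sum>i<k. poly (c i) (of_nat (n + s)) * G (n + (s + i))) / poly (c k) (of_nat (n + s))"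
        by (simp add: eq_neg_iff_add_eq_0 field_simps)
      then show ?case
        by (simp add: r_def d_def poly_pcompose sum_divide_distrib sum_negf[symmetric] add.commute)
    qed
    ultimately show ?thesis
      by (rule rational_shift_span_cong)
  qed
qed

lemma summable_seqI:
  fixes G H :: "nat \<Rightarrow> 'k::field_char_0"
  assumes "holonomic G" and diff: "\<And>n. G n = H (n + 1) - H n"
    and "rational_shift_span (seq_ord G) G H"
  shows "summable_seq G"
proof -
  define k where "k = seq_ord G"
  obtain q D where "D \<noteq> 0"
    and "\<forall>\<^sub>F n in sequentially. H n = (\<Sum>l<k. poly (q l) (of_nat n) / poly D (of_nat n) * G (n + l))"
    using assms(3) unfolding rational_shift_span_def k_def by blast
  then obtain N where N: "\<And>n. N \<le> n \<Longrightarrow> H n = (\<Sum>l<k. poly (q l) (of_nat n) / poly D (of_nat n) * G (n + l))"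
    unfolding eventually_sequentially by blast
  obtain R :: "'k poly" where "R \<noteq> 0" and R: "\<And>n. poly R (of_nat n) \<noteq> 0 \<Longrightarrow> N \<le> n"
    using ex_poly_nonzero_only_from by blast
  \<comment> \<open>Multiplying numerators and denominator by R makes the representation valid wherever the new
    denominator does not vanish, as the definition of summability requires.\<close>
  have H: "H n = (\<Sum>l<k. poly (q l * R) (of_nat n) / poly (D * R) (of_nat n) * G (n + l))"
    if "poly (D * R) (of_nat n) \<noteq> 0" for n
  proof -
    have "N \<le> n"
      using R that by simp
    then show ?thesis
      using N that by simp
  qed
  have "D * R \<noteq> 0"
    using \<open>D \<noteq> 0\<close> \<open>R \<noteq> 0\<close> by simp
  moreover have "G n = (\<Sum>i<k. poly (q i * R) (of_nat (n + 1)) / poly (D * R) (of_nat (n + 1)) * G (n + 1 + i))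
      - (\<Sum>i<k. poly (q i * R) (of_nat n) / poly (D * R) (of_nat n) * G (n + i))"
    if "poly (D * R) (of_nat n) \<noteq> 0 \<and> poly (D * R) (of_nat (n + 1)) \<noteq> 0" for n
    using diff[of n] H[of n] H[of "n + 1"] that by simp
  ultimately show ?thesis
    unfolding summable_seq_def k_def[symmetric] using \<open>holonomic G\<close>
    by (intro conjI exI[of _ "\<lambda>i. q i * R"] exI[of _ "D * R"] allI impI) auto
qed

section \<open>The Lagrange identity\<close>

lemma poly_adjoint:
  "poly (adjoint a J x) y = (\<Sum>i\<le>J. poly (a i) (y - of_nat i) * poly x (y - of_nat i))"
  by (simp add: adjoint_def poly_sum poly_pcompose)

definition concomitant ::
  "(nat \<Rightarrow> 'k::comm_ring_1 poly) \<Rightarrow> nat \<Rightarrow> 'k poly \<Rightarrow> (nat \<Rightarrow> 'k) \<Rightarrow> nat \<Rightarrow> 'k" where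
  "concomitant a J x F n = (\<Sum>i\<le>J. \<Sum>j<i.
     poly (a i) (of_nat n - of_nat (Suc j)) * poly x (of_nat n - of_nat (Suc j)) * F (n + i - Suc j))"

lemma lagrange_identity:
  "poly x (of_nat n) * apply_op a J F n - poly (adjoint a J x) (of_nat n) * F n =
     concomitant a J x F (n + 1) - concomitant a J x F n"
proof -
  define g where "g i j = poly (a i) (of_nat n - of_nat j) * poly x (of_nat n - of_nat j) * F (n + i - j)" for i j
  have "concomitant a J x F (n + 1) - concomitant a J x F n = (\<Sum>i\<le>J. \<Sum>j<i. g i j - g i (Suc j))"
    unfolding concomitant_def g_def by (simp add: sum_subtractf)
  also have "\<dots> = (\<Sum>i\<le>J. g i 0 - g i i)"
    by (simp add: sum_lessThan_telescope')
  also have "\<dots> = poly x (of_nat n) * apply_op a J F n - poly (adjoint a J x) (of_nat n) * F n"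
    unfolding apply_op_def poly_adjoint g_def
    by (simp add: sum_subtractf sum_distrib_left algebra_simps)
  finally show ?thesis ..
qed

lemma rational_shift_span_concomitant:
  fixes G :: "nat \<Rightarrow> 'k::field_char_0"
  assumes "\<And>m. rational_shift_span k G (\<lambda>n. F (n + m))"
  shows "rational_shift_span k G (concomitant a J x F)"
proof -
  define r where "r i j = pcompose (a i * x) [:- of_nat (Suc j), 1:]" for i j
  have "rational_shift_span k G (\<lambda>n. \<Sum>i\<le>J. \<Sum>j<i. poly (r i j) (of_nat n) * F (n + (i - Suc j)))"
    using assms by (intro rational_shift_span_sum rational_shift_span_poly_mult)
  moreover have "concomitant a J x F n = (\<Sum>i\<le>J. \<Sum>j<i. poly (r i j) (of_nat n) * F (n + (i - Suc j)))" for n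
    unfolding concomitant_def r_def
    by (intro sum.cong refl) (simp add: poly_pcompose algebra_simps)
  ultimately show ?thesis
    by (simp add: rational_shift_span_cong)
qed

section \<open>Degree of the adjoint\<close>

definition fwd_diff :: "'a::comm_ring_1 poly \<Rightarrow> 'a poly" where
  "fwd_diff x = pcompose x [:1, 1:] - x"

lemma poly_fwd_diff: "poly (fwd_diff x) y = poly x (y + 1) - poly x y"
  by (simp add: fwd_diff_def poly_pcompose add.commute)

lemma sum_Suc_choose_split:
  fixes f :: "nat \<Rightarrow> 'a::comm_ring_1"
  shows "(\<Sum>k\<le>Suc j. of_nat (Suc j choose k) * f k) =
         (\<Sum>k\<le>j. of_nat (j choose k) * f (Suc k)) + (\<Sum>k\<le>j. of_nat (j choose k) * f k)"
proof -
  have "(\<Sum>k\<le>Suc j. of_nat (Suc j choose k) * f k) =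
      f 0 + (\<Sum>k\<le>j. of_nat (j choose k) * f (Suc k)) + (\<Sum>k\<le>j. of_nat (j choose Suc k) * f (Suc k))"
    by (subst sum.atMost_Suc_shift) (simp add: sum.distrib distrib_right)
  moreover have "f 0 + (\<Sum>k\<le>j. of_nat (j choose Suc k) * f (Suc k)) = (\<Sum>k\<le>j. of_nat (j choose k) * f k)"
    using sum.atMost_Suc_shift[of "\<lambda>k. of_nat (j choose k) * f k" j] by (simp add: binomial_eq_0)
  ultimately show ?thesis
    by (simp add: algebra_simps)
qed

lemma poly_shift_eq_sum_fwd_diff:
  "poly x (y + of_nat j) = (\<Sum>k\<le>j. of_nat (j choose k) * poly ((fwd_diff ^^ k) x) y)"
proof (induction j arbitrary: y)
  case (Suc j)
  have "poly x (y + of_nat (Suc j)) = poly x ((y + 1) + of_nat j)"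
    by (simp add: algebra_simps)
  also have "\<dots> = (\<Sum>k\<le>j. of_nat (j choose k) * poly ((fwd_diff ^^ k) x) (y + 1))"
    by (rule Suc.IH)
  also have "\<dots> = (\<Sum>k\<le>j. of_nat (j choose k) * poly ((fwd_diff ^^ Suc k) x) y)
      + (\<Sum>k\<le>j. of_nat (j choose k) * poly ((fwd_diff ^^ k) x) y)"
    by (simp add: poly_fwd_diff sum.distrib[symmetric] algebra_simps)
  also have "\<dots> = (\<Sum>k\<le>Suc j. of_nat (Suc j choose k) * poly ((fwd_diff ^^ k) x) y)"
    by (rule sum_Suc_choose_split[symmetric])
  finally show ?case .
qed simp

lemma degree_fwd_diff_le:
  fixes x :: "'a::idom poly"
  shows "degree (fwd_diff x) \<le> degree x - 1"
proof (cases "degree x = 0")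
  case True
  then obtain c where "x = [:c:]"
    using degree_eq_zeroE by blast
  then show ?thesis
    by (simp add: fwd_diff_def)
next
  case False
  have deg: "degree (pcompose x [:1, 1:]) = degree x"
    by (simp add: degree_pcompose)
  have "coeff (fwd_diff x) (degree x) = 0"
    using lead_coeff_comp[of "[:1, 1:]" x] deg by (simp add: fwd_diff_def)
  then have "degree (fwd_diff x) \<noteq> degree x"
    using False by (metis leading_coeff_0_iff degree_0)
  moreover have "degree (fwd_diff x) \<le> degree x"
    unfolding fwd_diff_def using deg by (intro degree_diff_le) simp_all
  ultimately show ?thesis
    by simp
qed

lemma degree_funpow_fwd_diff_le:
  fixes x :: "'a::idom poly"
  shows "degree ((fwd_diff ^^ k) x) \<le> degree x - k"
proof (induction k)
  case (Suc k)
  then show ?case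
    using degree_fwd_diff_le[of "(fwd_diff ^^ k) x"] by simp
qed simp

lemma funpow_fwd_diff_eq_0:
  fixes x :: "'a::idom poly"
  assumes "degree x < k"
  shows "(fwd_diff ^^ k) x = 0"
proof -
  obtain i where k: "k = Suc (degree x + i)"
    using assms less_iff_Suc_add by auto
  have "degree ((fwd_diff ^^ (degree x + i)) x) = 0"
    using degree_funpow_fwd_diff_le[of "degree x + i" x] by simp
  then obtain c where "(fwd_diff ^^ (degree x + i)) x = [:c:]"
    using degree_eq_zeroE by blast
  then show ?thesis
    by (simp add: k fwd_diff_def)
qed

lemma op_order_le:
  assumes "op_nonzero a J"
  shows "op_order a J \<le> J"
  using assms GreatestI_nat[of "\<lambda>i. i \<le> J \<and> a i \<noteq> 0" _ J]
  unfolding op_nonzero_def op_order_def by blast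

lemma le_op_order:
  assumes "i \<le> J" "a i \<noteq> 0"
  shows "i \<le> op_order a J"
  unfolding op_order_def using assms by (intro Greatest_le_nat[of _ _ J]) auto

lemma adjoint_eq_sum_b_coeff:
  fixes a :: "nat \<Rightarrow> 'k::{idom,ring_char_0} poly"
  assumes "op_nonzero a J"
  defines "J' \<equiv> op_order a J"
  shows "adjoint a J x = (\<Sum>k\<le>J'. b_coeff a J k * pcompose ((fwd_diff ^^ k) x) [:- of_nat J', 1:])"
proof (rule poly_eq_poly_eq_iff[THEN iffD1], rule ext)
  fix y :: 'k
  define z where "z = y - of_nat J'"
  have "poly (adjoint a J x) y = (\<Sum>i\<le>J'. poly (a i) (y - of_nat i) * poly x (y - of_nat i))"
    unfolding poly_adjoint J'_def
    by (rule sum.mono_neutral_right) (use op_order_le[OF assms(1)] le_op_order[of _ J a] in force)+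
  also have "\<dots> = (\<Sum>j\<le>J'. poly (a (J' - j)) (z + of_nat j) * poly x (z + of_nat j))"
    by (rule sum.reindex_bij_witness[of _ "\<lambda>j. J' - j" "\<lambda>i. J' - i"]) (auto simp: z_def of_nat_diff)
  also have "\<dots> = (\<Sum>j\<le>J'. \<Sum>k\<le>J'. of_nat (j choose k) * poly (a (J' - j)) (z + of_nat j) * poly ((fwd_diff ^^ k) x) z)"
  proof (rule sum.cong)
    fix j assume "j \<in> {..J'}"
    then have "poly x (z + of_nat j) = (\<Sum>k\<le>J'. of_nat (j choose k) * poly ((fwd_diff ^^ k) x) z)"
      unfolding poly_shift_eq_sum_fwd_diff by (intro sum.mono_neutral_left) auto
    then show "poly (a (J' - j)) (z + of_nat j) * poly x (z + of_nat j) =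
      (\<Sum>k\<le>J'. of_nat (j choose k) * poly (a (J' - j)) (z + of_nat j) * poly ((fwd_diff ^^ k) x) z)"
      by (simp add: sum_distrib_left mult_ac)
  qed simp
  also have "\<dots> = (\<Sum>k\<le>J'. \<Sum>j\<le>J'. of_nat (j choose k) * poly (a (J' - j)) (z + of_nat j) * poly ((fwd_diff ^^ k) x) z)"
    by (rule sum.swap)
  also have "\<dots> = (\<Sum>k\<le>J'. poly (b_coeff a J k) y * poly ((fwd_diff ^^ k) x) z)"
  proof (rule sum.cong)
    fix k assume "k \<in> {..J'}"
    have "poly (b_coeff a J k) y = (\<Sum>j=k..J'. of_nat (j choose k) * poly (a (J' - j)) (z + of_nat j))"
      unfolding b_coeff_def Let_def J'_def[symmetric] poly_sum
      by (rule sum.cong) (auto simp: poly_pcompose z_def algebra_simps)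
    also have "\<dots> = (\<Sum>j\<le>J'. of_nat (j choose k) * poly (a (J' - j)) (z + of_nat j))"
      by (rule sum.mono_neutral_left) auto
    finally show "(\<Sum>j\<le>J'. of_nat (j choose k) * poly (a (J' - j)) (z + of_nat j) * poly ((fwd_diff ^^ k) x) z) =
        poly (b_coeff a J k) y * poly ((fwd_diff ^^ k) x) z"
      by (simp add: sum_distrib_right)
  qed simp
  finally show "poly (adjoint a J x) y =
      poly (\<Sum>k\<le>J'. b_coeff a J k * pcompose ((fwd_diff ^^ k) x) [:- of_nat J', 1:]) y"
    by (simp add: poly_sum poly_pcompose z_def)
qed

lemma b_coeff_degree_le_op_deg:
  assumes "k \<le> op_order a J" "b_coeff a J k \<noteq> 0"
  shows "int (degree (b_coeff a J k)) - int k \<le> op_deg a J"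
proof -
  have "finite ((\<lambda>k. int (degree (b_coeff a J k)) - int k) ` {..op_order a J})"
    by simp
  then have "finite {int (degree (b_coeff a J k)) - int k | k. k \<le> op_order a J \<and> b_coeff a J k \<noteq> 0}"
    by (rule finite_subset[rotated]) auto
  then show ?thesis
    unfolding op_deg_def using assms by (intro Max_ge) auto
qed

lemma degree_adjoint_le:
  fixes a :: "nat \<Rightarrow> 'k::{idom,ring_char_0} poly"
  assumes "op_nonzero a J" "adjoint a J x \<noteq> 0"
  shows "int (degree (adjoint a J x)) \<le> op_deg a J + int (degree x)"
proof -
  define J' where "J' = op_order a J"
  define t where "t k = b_coeff a J k * pcompose ((fwd_diff ^^ k) x) [:- of_nat J', 1:]" for k
  have adj: "adjoint a J x = (\<Sum>k\<le>J'. t k)"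
    unfolding t_def J'_def by (rule adjoint_eq_sum_b_coeff[OF assms(1)])
  have deg_t: "int (degree (t k)) \<le> op_deg a J + int (degree x)" if "k \<le> J'" "t k \<noteq> 0" for k
  proof -
    have b: "b_coeff a J k \<noteq> 0" and diff: "(fwd_diff ^^ k) x \<noteq> 0"
      using that(2) unfolding t_def by auto
    have "k \<le> degree x"
      using diff funpow_fwd_diff_eq_0[of x k] by linarith
    moreover have "degree (t k) = degree (b_coeff a J k) + degree ((fwd_diff ^^ k) x)"
      unfolding t_def using b diff by (simp add: degree_mult_eq degree_pcompose pcompose_eq_0_iff)
    moreover have "int (degree (b_coeff a J k)) - int k \<le> op_deg a J"
      using b_coeff_degree_le_op_deg b that(1) unfolding J'_def by blast
    ultimately show ?thesis
      using degree_funpow_fwd_diff_le[of k x] by linarith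
  qed
  obtain k0 where "k0 \<le> J'" "t k0 \<noteq> 0"
    using assms(2) adj by (metis atMost_iff sum.neutral)
  then have nonneg: "0 \<le> op_deg a J + int (degree x)"
    using deg_t by fastforce
  have "degree (\<Sum>k\<le>J'. t k) \<le> nat (op_deg a J + int (degree x))"
    using deg_t nonneg by (intro degree_sum_le) (fastforce simp: le_nat_iff)+
  then show ?thesis
    using adj nonneg by simp
qed

lemma poly_adjoint_eq_sum_monom:
  "poly (adjoint a J x) y = (\<Sum>c\<le>degree x. coeff x c * poly (adjoint a J (monom 1 c)) y)"
proof -
  have "poly (adjoint a J x) y =
      (\<Sum>i\<le>J. poly (a i) (y - of_nat i) * (\<Sum>c\<le>degree x. coeff x c * (y - of_nat i) ^ c))"
    unfolding poly_adjoint by (simp add: poly_altdef)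
  also have "\<dots> = (\<Sum>c\<le>degree x. coeff x c *
      (\<Sum>i\<le>J. poly (a i) (y - of_nat i) * poly (monom 1 c) (y - of_nat i)))"
    by (simp add: sum_distrib_left sum_distrib_right poly_monom mult_ac sum.swap[of _ "{..J}"])
  finally show ?thesis
    by (simp add: poly_adjoint)
qed

lemma ex_adjoint_monom_nonzero:
  fixes a :: "nat \<Rightarrow> 'k::{idom,ring_char_0} poly"
  assumes "op_nonzero a J"
  shows "\<exists>c. adjoint a J (monom 1 c) \<noteq> 0"
proof (rule ccontr)
  assume "\<nexists>c. adjoint a J (monom 1 c) \<noteq> 0"
  then have adj0: "poly (adjoint a J x) y = 0" for x y
    by (simp add: poly_adjoint_eq_sum_monom[of a J x])
  obtain i0 where "i0 \<le> J" "a i0 \<noteq> 0"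
    using assms unfolding op_nonzero_def by blast
  \<comment> \<open>Evaluating L^*(x) at y = N + i0 for an x vanishing at y - i for all i \<noteq> i0 isolates a_i0(N).\<close>
  have "poly (a i0) (of_nat N) = 0" for N
  proof -
    define y :: 'k where "y = of_nat (N + i0)"
    define x where "x = (\<Prod>i\<in>{..J} - {i0}. [:of_nat i - y, 1:])"
    have x_root: "poly x (y - of_nat i) = 0" if "i \<in> {..J} - {i0}" for i
      unfolding x_def poly_prod using that by (intro prod_zero) auto
    have "poly x (y - of_nat i0) = (\<Prod>i\<in>{..J} - {i0}. of_nat i - of_nat i0)"
      unfolding x_def poly_prod by (intro prod.cong) (auto simp: y_def)
    also have "\<dots> \<noteq> 0"
      by (subst prod_zero_iff) auto
    finally have x_nz: "poly x (y - of_nat i0) \<noteq> 0" .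
    have "0 = poly (adjoint a J x) y"
      by (simp add: adj0)
    also have "\<dots> = poly (a i0) (y - of_nat i0) * poly x (y - of_nat i0)"
      unfolding poly_adjoint using \<open>i0 \<le> J\<close> x_root
      by (subst sum.remove[of _ i0]) (auto intro!: sum.neutral)
    finally show ?thesis
      using x_nz by (simp add: y_def)
  qed
  then show False
    using finite_nat_roots[OF \<open>a i0 \<noteq> 0\<close>] by simp
qed

lemma holonomic_poly_mult:
  fixes F :: "nat \<Rightarrow> 'k::idom"
  assumes "op_nonzero a J" "annihilates a J F" "p \<noteq> 0"
  shows "holonomic (\<lambda>n. poly p (of_nat n) * F n)"
proof -
  \<comment> \<open>Multiplying a_i by \<Prod>_{j \<noteq> i} p(n + j) clears the factor p(n + i) of the i-th term.\<close>
  define b where "b i = a i * (\<Prod>j\<in>{..J} - {i}. pcompose p [:of_nat j, 1:])" for i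
  have "pcompose p [:of_nat j, 1:] \<noteq> 0" for j
    using assms(3) pcompose_eq_0_iff[of "[:of_nat j, 1::'k:]" p] by simp
  then have "b i \<noteq> 0" if "a i \<noteq> 0" for i
    using that unfolding b_def by (subst no_zero_divisors) (auto simp: prod_zero_iff)
  then have "op_nonzero b J"
    using assms(1) unfolding op_nonzero_def by blast
  moreover have "apply_op b J (\<lambda>n. poly p (of_nat n) * F n) n = 0" for n
  proof -
    define P where "P = (\<Prod>j\<le>J. poly p (of_nat n + of_nat j))"
    have "apply_op b J (\<lambda>n. poly p (of_nat n) * F n) n = (\<Sum>i\<le>J. P * (poly (a i) (of_nat n) * F (n + i)))"
      unfolding apply_op_def
    proof (rule sum.cong)
      fix i assume "i \<in> {..J}"
      then have "P = poly p (of_nat n + of_nat i) * (\<Prod>j\<in>{..J} - {i}. poly p (of_nat n + of_nat j))"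
        unfolding P_def by (subst prod.remove[of _ i]) auto
      then show "poly (b i) (of_nat n) * (poly p (of_nat (n + i)) * F (n + i)) = P * (poly (a i) (of_nat n) * F (n + i))"
        unfolding b_def by (simp add: poly_prod poly_pcompose add.commute mult_ac)
    qed simp
    also have "\<dots> = P * apply_op a J F n"
      unfolding apply_op_def by (simp add: sum_distrib_left)
    finally show ?thesis
      using assms(2) unfolding annihilates_def by simp
  qed
  ultimately show ?thesis
    unfolding holonomic_def annihilates_def by blast
qed

lemma holonomic_minimal_annihilator:
  assumes "holonomic G"
  obtains c where "annihilates c (seq_ord G) G" "c (seq_ord G) \<noteq> 0"
proof -
  define k where "k = seq_ord G"
  obtain c where c: "op_nonzero c k" "annihilates c k G"
    using LeastI_ex[of "\<lambda>J. \<exists>a. op_nonzero a J \<and> annihilates a J G"] assms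
    unfolding k_def seq_ord_def holonomic_def by blast
  have "c k \<noteq> 0"
  proof
    assume "c k = 0"
    with c(1) obtain i where "i < k" "c i \<noteq> 0"
      unfolding op_nonzero_def by (metis le_neq_implies_less)
    then have "op_nonzero c (k - 1)"
      unfolding op_nonzero_def by (intro exI[of _ i]) auto
    moreover have "apply_op c (k - 1) G n = apply_op c k G n" for n
    proof -
      have "{..k} = insert k {..k - 1}"
        using \<open>i < k\<close> by auto
      then show ?thesis
        unfolding apply_op_def using \<open>c k = 0\<close> \<open>i < k\<close> by (simp add: sum.insert_if)
    qed
    ultimately have "k \<le> k - 1"
      using c(2) unfolding k_def seq_ord_def annihilates_def by (intro Least_le) auto
    then show False
      using \<open>i < k\<close> by simp
  qed
  then show ?thesis
    using that c(2) unfolding k_def by blast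
qed

theorem theorem2p1:
  fixes F :: "nat \<Rightarrow> 'k::field_char_0"
    and a :: "nat \<Rightarrow> 'k poly" and J :: nat
  assumes "holonomic F"
    and "op_nonzero a J"
    and "annihilates a J F"
  shows "\<exists>p :: 'k poly. p \<noteq> 0 \<and> summable_seq (\<lambda>n. poly p (of_nat n) * F n) \<and>
           int (degree p) \<le> op_deg a J + int (cont_zero_index a J)"
proof -
  define C where "C = cont_zero_index a J"
  define p where "p = adjoint a J (monom 1 C)"
  have "p \<noteq> 0"
    unfolding p_def C_def cont_zero_index_def
    by (rule LeastI_ex) (rule ex_adjoint_monom_nonzero[OF assms(2)])
  have deg: "int (degree p) \<le> op_deg a J + int C"
    using degree_adjoint_le[OF assms(2), of "monom 1 C"] \<open>p \<noteq> 0\<close> by (simp add: p_def degree_monom_eq)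
  define G where "G n = poly p (of_nat n) * F n" for n
  define k where "k = seq_ord G"
  have "holonomic G"
    unfolding G_def using assms(2,3) \<open>p \<noteq> 0\<close> by (rule holonomic_poly_mult)
  then obtain c where "annihilates c k G" "c k \<noteq> 0"
    unfolding k_def by (rule holonomic_minimal_annihilator)
  then have G_shifts: "rational_shift_span k G (\<lambda>n. G (n + m))" for m
    by (rule rational_shift_span_all_shifts)
  have F_shifts: "rational_shift_span k G (\<lambda>n. F (n + m))" for m
  proof (rule rational_shift_span_cancel_poly)
    show "pcompose p [:of_nat m, 1:] \<noteq> 0"
      using \<open>p \<noteq> 0\<close> pcompose_eq_0_iff[of "[:of_nat m, 1:]" p] by simp
    show "rational_shift_span k G (\<lambda>n. poly (pcompose p [:of_nat m, 1:]) (of_nat n) * F (n + m))"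
      using G_shifts[of m] by (simp add: G_def poly_pcompose add.commute)
  qed
  define H where "H n = - concomitant a J (monom 1 C) F n" for n
  have "rational_shift_span k G H"
    using rational_shift_span_poly_mult[OF rational_shift_span_concomitant[OF F_shifts], of "[:-1:]"]
    unfolding H_def[abs_def] by simp
  moreover have "G n = H (n + 1) - H n" for n
  proof -
    have "- G n = concomitant a J (monom 1 C) F (n + 1) - concomitant a J (monom 1 C) F n"
      using lagrange_identity[of "monom 1 C" n a J F] assms(3)
      unfolding annihilates_def G_def p_def by simp
    then show ?thesis
      unfolding H_def by (simp add: algebra_simps)
  qed
  ultimately have "summable_seq G"
    using \<open>holonomic G\<close> by (intro summable_seqI[where H = H]) (simp_all add: k_def)
  then show ?thesis
    using \<open>p \<noteq> 0\<close> deg unfolding G_def C_def by blast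
qed

end
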